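(* For every $\widehat r\in\mathbb{N}$ and every $m\ge1$, \[\mathrm{Var}(\mu^{(b^m\widehat r+b^m-1)})=\frac1{b^m}\mathrm{Var}(\mu^{(\widehat r)})+\Big(1-\frac1{b^m}\Big)\mathrm{Var}(\mu^{(\widehat r+1)})+b-\frac1{b^{m-1}}.\]
   Context: Fix an integer $b\ge2$. For $n\in\mathbb{N}$ with base-$b$ digits $n_k$, $s(n):=\sum_kn_k$. For $r,n\in\mathbb{N}$, $\Delta^{(r)}(n):=s(n+r)-s(n)$, and $\mu^{(r)}(d):=\lim_{N\to\infty}\frac1N|\{n<N:\Delta^{(r)}(n)=d\}|$ for $d\in\mathbb{Z}$; these limits exist and $\mu^{(r)}$ is a probability measure on $\mathbb{Z}$ with finite moments. $\mathrm{Var}(\mu^{(r)})$ is its variance. *)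

theory Defs
  imports "HOL-Analysis.Analysis"
begin

function digsum :: "nat \<Rightarrow> nat \<Rightarrow> nat" where
  "digsum b n = (if b < 2 \<or> n = 0 then 0 else n mod b + digsum b (n div b))"
  by auto
termination by (relation "Wellfounded.measure snd") auto

declare digsum.simps [simp del]

definition Delta :: "nat \<Rightarrow> nat \<Rightarrow> nat \<Rightarrow> int" where
  "Delta b r n = int (digsum b (n + r)) - int (digsum b n)"

definition mu :: "nat \<Rightarrow> nat \<Rightarrow> int \<Rightarrow> real" where
  "mu b r d = lim (\<lambda>N. real (card {n. n < N \<and> Delta b r n = d}) / real N)"

definition Var_mu :: "nat \<Rightarrow> nat \<Rightarrow> real" where
  "Var_mu b r = (\<Sum>\<^sub>\<infinity> d\<in>(UNIV::int set). (real_of_int d)^2 * mu b r d)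
              - (\<Sum>\<^sub>\<infinity> d\<in>(UNIV::int set). real_of_int d * mu b r d)^2"

end

theory Submission
  imports Defs
begin

(*
  Split n = b^m q + j with j < b^m. Adding r' = b^m r + (b^m - 1) carries out of the lowest m digits
  exactly when j > 0, so Delta^(r')(b^m q + j) = Delta^(rho_j)(q) + kappa_j, where rho_0 = r,
  rho_j = r + 1 for j > 0, and kappa_j = s((j - 1) mod b^m) - s(j). Counting along residue classes,
  mu^(r') is the average over j of the laws mu^(rho_j) shifted by kappa_j. The kappa_j sum to zero
  (j -> (j + a) mod b^m permutes the residues), and every mu^(r) has mean zero, so the second moment of
  the average is the average of the variances plus the mean of kappa_j^2, which is (b^(m+1) - b)/b^m.

  Existence of the densities and of finite second moments comes from the same decomposition with m = 1,
  by strong induction on r; the base case r = 1 refers to itself and is settled by the explicit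
  geometric law mu^(1)(1 - (b - 1) k) = (b - 1)/b^(k+1).
*)

section \<open>Digit sums and carries\<close>

lemma digsum_0 [simp]: "digsum b 0 = 0"
  by (simp add: digsum.simps)

lemma digsum_unfold: "b \<ge> 2 \<Longrightarrow> digsum b n = (if n = 0 then 0 else n mod b + digsum b (n div b))"
  by (subst digsum.simps) auto

lemma digsum_mult_add:
  assumes "b \<ge> 2" "a < b"
  shows "digsum b (b * q + a) = digsum b q + a"
  using assms by (subst digsum_unfold) auto

lemma digsum_less: "b \<ge> 2 \<Longrightarrow> a < b \<Longrightarrow> digsum b a = a"
  using digsum_mult_add[of b a 0] by simp

lemma digsum_pow_mult_add:
  assumes b: "b \<ge> 2" and "j < b ^ m"
  shows "digsum b (b ^ m * q + j) = digsum b q + digsum b j"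
  using assms(2)
proof (induction m arbitrary: q j)
  case 0
  then show ?case by simp
next
  case (Suc m)
  have "j div b < b ^ m"
    using Suc.prems b by (simp add: div_less_iff_less_mult mult.commute)
  have "b ^ Suc m * q + j = b * (b ^ m * q + j div b) + j mod b"
    by (simp add: algebra_simps)
  then have "digsum b (b ^ Suc m * q + j) = digsum b (b ^ m * q + j div b) + j mod b"
    using b by (simp add: digsum_mult_add)
  also have "\<dots> = digsum b q + (digsum b (j div b) + j mod b)"
    using Suc.IH[OF \<open>j div b < b ^ m\<close>] by simp
  also have "digsum b (j div b) + j mod b = digsum b j"
    using digsum_mult_add[OF b, of "j mod b" "j div b"] b by simp
  finally show ?case .
qed

(* For B = b^m and a = b^m - 1 this is the kappa_j above. *)
definition digsum_gain :: "nat \<Rightarrow> nat \<Rightarrow> nat \<Rightarrow> nat \<Rightarrow> int" where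
  "digsum_gain b B a j = int (digsum b ((j + a) mod B)) - int (digsum b j)"

lemma Delta_pow_mult_add:
  assumes b: "b \<ge> 2" and a: "a < b ^ m" and j: "j < b ^ m"
  shows "Delta b (b ^ m * r + a) (b ^ m * q + j) =
    Delta b (if j + a < b ^ m then r else Suc r) q + digsum_gain b (b ^ m) a j"
proof (cases "j + a < b ^ m")
  case True
  have "digsum b (b ^ m * q + j + (b ^ m * r + a)) = digsum b (q + r) + digsum b (j + a)"
    using digsum_pow_mult_add[OF b True, of "q + r"] by (simp add: algebra_simps)
  then show ?thesis
    using True digsum_pow_mult_add[OF b j, of q] by (simp add: Delta_def digsum_gain_def)
next
  case False
  then have carry: "(j + a) mod b ^ m = j + a - b ^ m" and "j + a - b ^ m < b ^ m"
    using a j by (simp_all add: le_mod_geq)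
  have "b ^ m * q + j + (b ^ m * r + a) = b ^ m * (q + Suc r) + (j + a - b ^ m)"
    using False by (simp add: algebra_simps)
  then have "digsum b (b ^ m * q + j + (b ^ m * r + a)) 
      = digsum b (q + Suc r) + digsum b (j + a - b ^ m)"
    by (simp only: digsum_pow_mult_add[OF b \<open>j + a - b ^ m < b ^ m\<close>])
  then show ?thesis
    using False carry digsum_pow_mult_add[OF b j, of q] by (simp add: Delta_def digsum_gain_def)
qed

section \<open>Densities along residue classes\<close>

definition freq :: "(nat \<Rightarrow> bool) \<Rightarrow> nat \<Rightarrow> real" where
  "freq P N = real (card {n. n < N \<and> P n}) / real N"

lemma mu_eq_lim_freq: "mu b r d = lim (freq (\<lambda>n. Delta b r n = d))"
  by (simp add: mu_def freq_def[abs_def])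

lemma mult_add_less_iff:
  fixes B :: nat
  assumes "j < B"
  shows "B * q + j < N \<longleftrightarrow> q < (N + (B - 1 - j)) div B"
proof -
  have "q < (N + (B - 1 - j)) div B \<longleftrightarrow> Suc q * B \<le> N + (B - 1 - j)"
    using assms by (metis Suc_le_eq less_eq_div_iff_mult_less_eq not_less0 gr0I)
  also have "\<dots> \<longleftrightarrow> B * q + j < N"
    using assms by (auto simp: algebra_simps)
  finally show ?thesis by simp
qed

lemma card_residue_classes:
  fixes B :: nat
  assumes B: "B > 0" and PQ: "\<And>q j. j < B \<Longrightarrow> P (B * q + j) \<longleftrightarrow> Q j q"
  shows "card {n. n < N \<and> P n} = (\<Sum>j<B. card {q. q < (N + (B - 1 - j)) div B \<and> Q j q})"
proof -
  let ?S = "{n. n < N \<and> P n}"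
  have "(\<lambda>n. n mod B) ` ?S \<subseteq> {..<B}"
    using B by auto
  then have "card ?S = (\<Sum>j<B. card {n \<in> ?S. n mod B = j})"
    using sum.group[OF _ finite_lessThan[of B], of ?S "\<lambda>n. n mod B" "\<lambda>_. 1::nat"] by simp
  also have "\<dots> = (\<Sum>j<B. card {q. q < (N + (B - 1 - j)) div B \<and> Q j q})"
  proof (rule sum.cong[OF refl])
    fix j assume "j \<in> {..<B}"
    then have j: "j < B" by simp
    have "{n \<in> ?S. n mod B = j} = (\<lambda>q. B * q + j) ` {q. q < (N + (B - 1 - j)) div B \<and> Q j q}"
    proof (intro equalityI subsetI)
      fix n assume n: "n \<in> {n \<in> ?S. n mod B = j}"
      then have "n = B * (n div B) + j"
        using mult_div_mod_eq[of B n] by simp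
      then show "n \<in> (\<lambda>q. B * q + j) ` {q. q < (N + (B - 1 - j)) div B \<and> Q j q}"
        using n mult_add_less_iff[OF j, of "n div B" N] PQ[OF j, of "n div B"]
        by (auto intro: image_eqI)
    qed (use j PQ mult_add_less_iff in auto)
    moreover have "inj (\<lambda>q. B * q + j)"
      using B by (auto simp: inj_on_def)
    ultimately show "card {n \<in> ?S. n mod B = j} = card {q. q < (N + (B - 1 - j)) div B \<and> Q j q}"
      by (simp add: card_image inj_on_subset)
  qed
  finally show ?thesis .
qed

lemma tendsto_add_div_over:
  fixes B k :: nat
  assumes B: "B > 0"
  shows "(\<lambda>N. real ((N + k) div B) / real N) \<longlonglongrightarrow> 1 / real B"
proof (rule tendsto_sandwich)
  have floor: "real (N + k) / real B - 1 \<le> real ((N + k) div B)"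
    and ceil: "real ((N + k) div B) \<le> real (N + k) / real B" for N
  proof -
    have "real (N + k) = real B * real ((N + k) div B) + real ((N + k) mod B)"
      by (metis of_nat_add of_nat_mult mult_div_mod_eq)
    moreover have "real ((N + k) mod B) < real B"
      using B by simp
    ultimately show "real (N + k) / real B - 1 \<le> real ((N + k) div B)"
      and "real ((N + k) div B) \<le> real (N + k) / real B"
      using B by (simp_all add: field_simps)
  qed
  show "\<forall>\<^sub>F N in sequentially. 1 / real B - 1 / real N \<le> real ((N + k) div B) / real N"
  proof (rule eventually_sequentiallyI[of 1])
    fix N :: nat assume "1 \<le> N"
    then have "1 / real B - 1 / real N \<le> (real (N + k) / real B - 1) / real N"
      using B by (simp add: field_simps)
    also have "\<dots> \<le> real ((N + k) div B) / real N"
      by (rule divide_right_mono[OF floor]) simp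
    finally show "1 / real B - 1 / real N \<le> real ((N + k) div B) / real N" .
  qed
  show "\<forall>\<^sub>F N in sequentially. real ((N + k) div B) / real N \<le> 1 / real B + real k / real B / real N"
  proof (rule eventually_sequentiallyI[of 1])
    fix N :: nat assume "1 \<le> N"
    then show "real ((N + k) div B) / real N \<le> 1 / real B + real k / real B / real N"
      using divide_right_mono[OF ceil[of N], of "real N"] B by (simp add: field_simps)
  qed
  show "(\<lambda>N. 1 / real B - 1 / real N) \<longlonglongrightarrow> 1 / real B"
    using tendsto_diff[OF tendsto_const lim_const_over_n] by simp
  show "(\<lambda>N. 1 / real B + real k / real B / real N) \<longlonglongrightarrow> 1 / real B"
    using tendsto_add[OF tendsto_const lim_const_over_n, of "1 / real B" "real k / real B"] by simp
qed

lemma filterlim_add_div_at_top: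
  fixes B k :: nat
  assumes "B > 0"
  shows "filterlim (\<lambda>N. (N + k) div B) at_top sequentially"
  unfolding filterlim_at_top
proof
  fix Z :: nat
  show "\<forall>\<^sub>F N in sequentially. Z \<le> (N + k) div B"
    by (rule eventually_sequentiallyI[of "Z * B"])
      (use assms in \<open>simp add: less_eq_div_iff_mult_less_eq\<close>)
qed

lemma tendsto_freq_rescaled:
  fixes B k :: nat
  assumes lim: "freq Q \<longlonglongrightarrow> L" and B: "B > 0"
  shows "(\<lambda>N. real (card {q. q < (N + k) div B \<and> Q q}) / real N) \<longlonglongrightarrow> L / real B"
proof -
  have "(\<lambda>N. freq Q ((N + k) div B) * (real ((N + k) div B) / real N)) \<longlonglongrightarrow> L * (1 / real B)"
    using filterlim_compose[OF lim filterlim_add_div_at_top[OF B]] tendsto_add_div_over[OF B]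
    by (intro tendsto_mult) simp_all
  moreover have "freq Q ((N + k) div B) * (real ((N + k) div B) / real N)
      = real (card {q. q < (N + k) div B \<and> Q q}) / real N" for N
    by (cases "(N + k) div B = 0") (simp_all add: freq_def)
  ultimately show ?thesis
    by (simp only: mult_1_right times_divide_eq_right)
qed

lemma tendsto_freq_residue_classes:
  fixes B :: nat
  assumes B: "B > 0" and PQ: "\<And>q j. j < B \<Longrightarrow> P (B * q + j) \<longleftrightarrow> Q j q"
    and lim: "\<And>j. j < B \<Longrightarrow> freq (Q j) \<longlonglongrightarrow> L j"
  shows "freq P \<longlonglongrightarrow> (\<Sum>j<B. L j) / real B"
proof -
  have "freq P = (\<lambda>N. \<Sum>j<B. real (card {q. q < (N + (B - 1 - j)) div B \<and> Q j q}) / real N)"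
  proof
    fix N
    have "card {n. n < N \<and> P n} = (\<Sum>j<B. card {q. q < (N + (B - 1 - j)) div B \<and> Q j q})"
      by (rule card_residue_classes[OF B]) (rule PQ)
    then show "freq P N = (\<Sum>j<B. real (card {q. q < (N + (B - 1 - j)) div B \<and> Q j q}) / real N)"
      by (simp only: freq_def of_nat_sum sum_divide_distrib)
  qed
  moreover have "(\<lambda>N. \<Sum>j<B. real (card {q. q < (N + (B - 1 - j)) div B \<and> Q j q}) / real N)
      \<longlonglongrightarrow> (\<Sum>j<B. L j / real B)"
    using lim B by (intro tendsto_sum tendsto_freq_rescaled) simp_all
  ultimately show ?thesis
    by (simp only: sum_divide_distrib)
qed

definition has_densities :: "nat \<Rightarrow> nat \<Rightarrow> bool" where
  "has_densities b r \<longleftrightarrow> (\<forall>d. convergent (freq (\<lambda>n. Delta b r n = d)))"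

lemma tendsto_freq_mu: "has_densities b r \<Longrightarrow> freq (\<lambda>n. Delta b r n = d) \<longlonglongrightarrow> mu b r d"
  by (simp add: has_densities_def mu_eq_lim_freq convergent_LIMSEQ_iff)

lemma mu_eqI: "freq (\<lambda>n. Delta b r n = d) \<longlonglongrightarrow> L \<Longrightarrow> mu b r d = L"
  by (simp add: mu_eq_lim_freq limI)

lemma mu_average:
  fixes \<rho> :: "nat \<Rightarrow> nat" and \<kappa> :: "nat \<Rightarrow> int"
  assumes B: "B > 0" and split: "\<And>q j. j < B \<Longrightarrow> Delta b r (B * q + j) = Delta b (\<rho> j) q + \<kappa> j"
    and densities: "\<And>j. j < B \<Longrightarrow> has_densities b (\<rho> j)"
  shows "has_densities b r" and "mu b r = (\<lambda>d. (\<Sum>j<B. mu b (\<rho> j) (d - \<kappa> j)) / real B)"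
proof -
  have lim: "freq (\<lambda>n. Delta b r n = d) \<longlonglongrightarrow> (\<Sum>j<B. mu b (\<rho> j) (d - \<kappa> j)) / real B" for d
  proof (rule tendsto_freq_residue_classes[OF B])
    show "Delta b r (B * q + j) = d \<longleftrightarrow> Delta b (\<rho> j) q = d - \<kappa> j" if "j < B" for q j
      using split[OF that] by auto
    show "freq (\<lambda>q. Delta b (\<rho> j) q = d - \<kappa> j) \<longlonglongrightarrow> mu b (\<rho> j) (d - \<kappa> j)" if "j < B" for j
      by (rule tendsto_freq_mu[OF densities[OF that]])
  qed
  then show "has_densities b r"
    unfolding has_densities_def convergent_def by blast
  show "mu b r = (\<lambda>d. (\<Sum>j<B. mu b (\<rho> j) (d - \<kappa> j)) / real B)"
    by (rule ext) (rule mu_eqI[OF lim])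
qed

section \<open>Sums of the carry corrections\<close>

lemma sum_mod_add:
  fixes B :: nat
  assumes "B > 0"
  shows "(\<Sum>j<B. f ((j + a) mod B)) = (\<Sum>j<B. f j)"
proof (rule sum.reindex_bij_betw)
  have "inj_on (\<lambda>j. (j + a) mod B) {..<B}"
  proof (rule inj_onI)
    fix j k assume "j \<in> {..<B}" "k \<in> {..<B}" "(j + a) mod B = (k + a) mod B"
    then have "j mod B = k mod B"
      unfolding nat_mod_eq_iff by auto
    with \<open>j \<in> {..<B}\<close> \<open>k \<in> {..<B}\<close> show "j = k" by simp
  qed
  then show "bij_betw (\<lambda>j. (j + a) mod B) {..<B} {..<B}"
    using assms by (simp add: bij_betw_def endo_inj_surj image_subset_iff)
qed

lemma sum_lessThan_mult:
  fixes f :: "nat \<Rightarrow> 'a::comm_monoid_add"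
  shows "(\<Sum>j<b * Q. f j) = (\<Sum>q<Q. \<Sum>a<b. f (b * q + a))"
proof -
  have "(\<Sum>j\<in>{q * b..<q * b + b}. f j) = (\<Sum>a<b. f (b * q + a))" for q
    using sum.shift_bounds_nat_ivl[of f 0 "q * b" b]
    by (simp add: atLeast0LessThan mult.commute add.commute)
  then show ?thesis
    using sum.nat_group[of f b Q] by (simp add: mult.commute)
qed

lemma sum_lessThan_if_eq:
  fixes X Y :: "'a::comm_semiring_1"
  assumes "k < B"
  shows "(\<Sum>j<B. if j = k then X else Y) = X + of_nat (B - 1) * Y"
proof -
  have "(\<Sum>j\<in>{..<B} - {k}. if j = k then X else Y) = (\<Sum>j\<in>{..<B} - {k}. Y)"
    by (rule sum.cong) auto
  then show ?thesis
    using assms sum.remove[of "{..<B}" k "\<lambda>j. if j = k then X else Y"] by simp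
qed

lemma sum_digsum_gain: "B > 0 \<Longrightarrow> (\<Sum>j<B. digsum_gain b B a j) = 0"
  by (simp add: digsum_gain_def sum_subtractf sum_mod_add[where f = "\<lambda>j. int (digsum b j)"])

lemma digsum_gain_pred:
  assumes "j < B"
  shows "digsum_gain b B (B - 1) j
    = (if j = 0 then int (digsum b (B - 1)) else int (digsum b (j - 1)) - int (digsum b j))"
proof -
  have "(j + (B - 1)) mod B = (if j = 0 then B - 1 else j - 1)"
    using assms by (cases j) simp_all
  then show ?thesis by (simp add: digsum_gain_def)
qed

lemma digsum_gain_pred_mult_add:
  assumes b: "b \<ge> 2" and a: "a < b" and q: "q < b ^ m"
  shows "digsum_gain b (b ^ Suc m) (b ^ Suc m - 1) (b * q + a)
    = (if a = 0 then digsum_gain b (b ^ m) (b ^ m - 1) q + (int b - 1) else -1)"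
proof -
  have "b * q + a < b * (q + 1)"
    using a by simp
  also have "\<dots> \<le> b ^ Suc m"
    using q by (simp del: mult_Suc_right)
  finally have "b * q + a < b ^ Suc m" .
  then have gain: "digsum_gain b (b ^ Suc m) (b ^ Suc m - 1) (b * q + a)
      = (if b * q + a = 0 then int (digsum b (b ^ Suc m - 1))
         else int (digsum b (b * q + a - 1)) - int (digsum b (b * q + a)))"
    by (rule digsum_gain_pred)
  consider "a > 0" | "a = 0" "q = 0" | "a = 0" "q > 0"
    by blast
  then show ?thesis
  proof cases
    case 1
    then show ?thesis
      using gain digsum_mult_add[OF b a, of q] digsum_mult_add[OF b, of "a - 1" q] a by simp
  next
    case 2
    have "b ^ Suc m - 1 = b * (b ^ m - 1) + (b - 1)"
      using b by (simp add: algebra_simps diff_mult_distrib2)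
    then have "digsum b (b ^ Suc m - 1) = digsum b (b ^ m - 1) + (b - 1)"
      using digsum_mult_add[OF b, of "b - 1"] b by simp
    then show ?thesis
      using 2 gain b digsum_gain_pred[of 0 "b ^ m" b] by simp
  next
    case 3
    have "b * q - 1 = b * (q - 1) + (b - 1)"
      using 3 b by (cases q) (auto simp: algebra_simps)
    then have "digsum b (b * q - 1) = digsum b (q - 1) + (b - 1)"
      using digsum_mult_add[OF b, of "b - 1"] b by simp
    moreover have "digsum b (b * q) = digsum b q"
      using digsum_mult_add[OF b, of 0 q] b by simp
    ultimately show ?thesis
      using 3 gain b digsum_gain_pred[OF q, of b] by simp
  qed
qed

lemma sum_digsum_gain_pred_squared:
  assumes b: "b \<ge> 2"
  shows "(\<Sum>j<b ^ m. (digsum_gain b (b ^ m) (b ^ m - 1) j)^2) = int b ^ Suc m - int b"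
proof (induction m)
  case 0
  then show ?case by (simp add: digsum_gain_def)
next
  case (Suc m)
  let ?g = "digsum_gain b (b ^ m) (b ^ m - 1)"
  have row: "(\<Sum>a<b. (digsum_gain b (b ^ Suc m) (b ^ Suc m - 1) (b * q + a))^2)
      = (?g q + (int b - 1))^2 + (int b - 1)" if "q < b ^ m" for q
  proof -
    have "(\<Sum>a<b. (digsum_gain b (b ^ Suc m) (b ^ Suc m - 1) (b * q + a))^2)
        = (\<Sum>a<b. if a = 0 then (?g q + (int b - 1))^2 else 1)"
      using digsum_gain_pred_mult_add[OF b _ that] by (intro sum.cong) auto
    then show ?thesis
      using sum_lessThan_if_eq[of 0 b "(?g q + (int b - 1))^2" 1] b by (simp add: of_nat_diff)
  qed
  have "(\<Sum>j<b ^ Suc m. (digsum_gain b (b ^ Suc m) (b ^ Suc m - 1) j)^2)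
      = (\<Sum>q<b ^ m. \<Sum>a<b. (digsum_gain b (b ^ Suc m) (b ^ Suc m - 1) (b * q + a))^2)"
    using sum_lessThan_mult[of _ b "b ^ m"] by (simp only: power_Suc)
  also have "\<dots> = (\<Sum>q<b ^ m. (?g q + (int b - 1))^2 + (int b - 1))"
    by (rule sum.cong[OF refl]) (rule row, simp)
  also have "\<dots> = (\<Sum>q<b ^ m. (?g q)^2 + 2 * (int b - 1) * ?g q + ((int b - 1)^2 + (int b - 1)))"
    by (rule sum.cong[OF refl]) (simp add: power2_eq_square algebra_simps)
  also have "\<dots> = (\<Sum>q<b ^ m. (?g q)^2) + 2 * (int b - 1) * (\<Sum>q<b ^ m. ?g q)
      + int (b ^ m) * ((int b - 1)^2 + (int b - 1))"
    by (simp add: sum.distrib sum_distrib_left)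
  also have "\<dots> = int b ^ Suc (Suc m) - int b"
    using Suc.IH sum_digsum_gain[of "b ^ m" b "b ^ m - 1"] b
    by (simp add: power2_eq_square algebra_simps)
  finally show ?case .
qed

section \<open>Moments of averaged shifts\<close>

definition has_moments :: "(int \<Rightarrow> real) \<Rightarrow> real \<Rightarrow> real \<Rightarrow> real \<Rightarrow> bool" where
  "has_moments p T M S \<longleftrightarrow> (p has_sum T) UNIV \<and> ((\<lambda>d. of_int d * p d) has_sum M) UNIV
     \<and> ((\<lambda>d. (of_int d)^2 * p d) has_sum S) UNIV"

lemma has_sum_average:
  fixes f :: "nat \<Rightarrow> 'a \<Rightarrow> real"
  assumes "\<And>j. j < B \<Longrightarrow> (f j has_sum s j) A"
  shows "((\<lambda>x. (\<Sum>j<B. f j x) / real B) has_sum ((\<Sum>j<B. s j) / real B)) A"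
proof -
  have "((\<lambda>x. \<Sum>j\<in>J. f j x) has_sum (\<Sum>j\<in>J. s j)) A" if "J \<subseteq> {..<B}" for J
    using finite_subset[OF that finite_lessThan] that
    by (induction J rule: finite_induct) (auto intro: has_sum_add assms)
  from has_sum_cmult_right[OF this[OF order_refl], of "1 / real B"] show ?thesis
    by simp
qed

lemma has_moments_shift:
  assumes "has_moments p T M S"
  shows "has_moments (\<lambda>d. p (d - c)) T (M + of_int c * T) (S + 2 * of_int c * M + (of_int c)^2 * T)"
proof -
  have bij: "bij_betw (\<lambda>e. e + c) UNIV UNIV"
    by (rule bij_betwI[where g = "\<lambda>e. e - c"]) auto
  have shift: "((\<lambda>d. w d * p (d - c)) has_sum s) UNIV"
    if "((\<lambda>e. w (e + c) * p e) has_sum s) UNIV" for w :: "int \<Rightarrow> real" and s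
    using that has_sum_reindex_bij_betw[OF bij, of "\<lambda>d. w d * p (d - c)"] by simp
  have "(p has_sum T) UNIV"
    and "((\<lambda>e. of_int e * p e + of_int c * p e) has_sum (M + of_int c * T)) UNIV"
    and "((\<lambda>e. (of_int e)^2 * p e + 2 * of_int c * (of_int e * p e) + (of_int c)^2 * p e)
          has_sum (S + 2 * of_int c * M + (of_int c)^2 * T)) UNIV"
    using assms unfolding has_moments_def by (auto intro!: has_sum_add has_sum_cmult_right)
  then have "((\<lambda>e. 1 * p e) has_sum T) UNIV"
    and "((\<lambda>e. of_int (e + c) * p e) has_sum (M + of_int c * T)) UNIV"
    and "((\<lambda>e. (of_int (e + c))^2 * p e) has_sum (S + 2 * of_int c * M + (of_int c)^2 * T)) UNIV"
    by (simp_all add: algebra_simps power2_eq_square)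
  from this[THEN shift] show ?thesis
    unfolding has_moments_def by simp
qed

lemma has_moments_average:
  fixes q :: "nat \<Rightarrow> int \<Rightarrow> real" and \<kappa> :: "nat \<Rightarrow> int" and T M S :: "nat \<Rightarrow> real"
  assumes "\<And>j. j < B \<Longrightarrow> has_moments (q j) (T j) (M j) (S j)"
  shows "has_moments (\<lambda>d. (\<Sum>j<B. q j (d - \<kappa> j)) / real B)
    ((\<Sum>j<B. T j) / real B)
    ((\<Sum>j<B. M j + of_int (\<kappa> j) * T j) / real B)
    ((\<Sum>j<B. S j + 2 * of_int (\<kappa> j) * M j + (of_int (\<kappa> j))^2 * T j) / real B)"
proof -
  have "has_moments (\<lambda>d. q j (d - \<kappa> j)) (T j) (M j + of_int (\<kappa> j) * T j)
      (S j + 2 * of_int (\<kappa> j) * M j + (of_int (\<kappa> j))^2 * T j)" if "j < B" for j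
    using has_moments_shift[OF assms[OF that]] .
  then have "((\<lambda>d. (\<Sum>j<B. q j (d - \<kappa> j)) / real B) has_sum ((\<Sum>j<B. T j) / real B)) UNIV"
    and "((\<lambda>d. (\<Sum>j<B. of_int d * q j (d - \<kappa> j)) / real B)
          has_sum ((\<Sum>j<B. M j + of_int (\<kappa> j) * T j) / real B)) UNIV"
    and "((\<lambda>d. (\<Sum>j<B. (of_int d)^2 * q j (d - \<kappa> j)) / real B)
          has_sum ((\<Sum>j<B. S j + 2 * of_int (\<kappa> j) * M j + (of_int (\<kappa> j))^2 * T j) / real B)) UNIV"
    unfolding has_moments_def by (auto intro!: has_sum_average)
  then show ?thesis
    unfolding has_moments_def by (simp add: sum_distrib_left)
qed

lemma abs_le_square_of_int: "\<bar>of_int d :: real\<bar> \<le> (of_int d)^2"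
proof -
  have "\<bar>of_int d :: real\<bar> * 1 \<le> \<bar>of_int d\<bar> * \<bar>of_int d\<bar>" if "d \<noteq> 0"
    using that by (intro mult_left_mono) linarith+
  then show ?thesis
    by (cases "d = 0") (simp_all add: power2_eq_square)
qed

lemma has_moments_of_summable_second:
  assumes nonneg: "\<And>d. p d \<ge> 0" and second: "(\<lambda>d. (of_int d)^2 * p d) summable_on UNIV"
  shows "has_moments p (infsum p UNIV) (infsum (\<lambda>d. of_int d * p d) UNIV)
    (infsum (\<lambda>d. (of_int d)^2 * p d) UNIV)"
proof -
  \<comment> \<open>the atom at 0 covers the one point where the second moment does not dominate\<close>
  define g where "g d = (of_int d)^2 * p d + (if d = 0 then p 0 else 0)" for d :: int
  have "(\<lambda>d::int. if d = 0 then p 0 else 0) summable_on UNIV"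
    by (subst summable_on_cong_neutral[where T = "{0}"]) auto
  then have "g summable_on UNIV"
    unfolding g_def by (intro summable_on_add second)
  moreover have le_g: "p d \<le> g d \<and> \<bar>of_int d * p d\<bar> \<le> g d" for d
  proof (cases "d = 0")
    case True
    then show ?thesis by (simp add: g_def nonneg)
  next
    case False
    then have "1 \<le> \<bar>of_int d :: real\<bar>"
      by linarith
    then have "1 * p d \<le> (of_int d)^2 * p d"
      using abs_le_square_of_int[of d] nonneg[of d] by (intro mult_right_mono) linarith+
    moreover have "\<bar>of_int d\<bar> * p d \<le> (of_int d)^2 * p d"
      using abs_le_square_of_int[of d] nonneg[of d] by (rule mult_right_mono)
    ultimately show ?thesis
      using False nonneg[of d] by (simp add: g_def abs_mult)
  qed
  ultimately have "p summable_on UNIV" and "(\<lambda>d. norm (of_int d * p d)) summable_on UNIV"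
    by (auto intro: summable_on_comparison_test nonneg simp del: norm_mult)
  then have "p summable_on UNIV" and "(\<lambda>d. of_int d * p d) summable_on UNIV"
    by (simp_all add: summable_on_iff_abs_summable_on_real[of "\<lambda>d. of_int d * p d"])
  with second show ?thesis
    by (simp add: has_moments_def)
qed

lemma Var_mu_eq_moments:
  assumes "has_moments (mu b r) T M S"
  shows "Var_mu b r = S - M^2"
proof -
  from assms have "(\<Sum>\<^sub>\<infinity>d. of_int d * mu b r d) = M" and "(\<Sum>\<^sub>\<infinity>d. (of_int d)^2 * mu b r d) = S"
    unfolding has_moments_def by (auto intro: infsumI)
  then show ?thesis
    by (simp add: Var_mu_def)
qed

lemma has_moments_mu_average:
  fixes \<rho> :: "nat \<Rightarrow> nat" and S :: "nat \<Rightarrow> real"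
  assumes B: "B > 0"
    and split: "\<And>q j. j < B \<Longrightarrow> Delta b r (B * q + j) = Delta b (\<rho> j) q + digsum_gain b B a j"
    and densities: "\<And>j. j < B \<Longrightarrow> has_densities b (\<rho> j)"
    and moments: "\<And>j. j < B \<Longrightarrow> has_moments (mu b (\<rho> j)) 1 0 (S j)"
  shows "has_densities b r"
    and "has_moments (mu b r) 1 0 ((\<Sum>j<B. S j + (of_int (digsum_gain b B a j))^2) / real B)"
proof -
  show "has_densities b r"
    by (rule mu_average(1)[OF B split densities])
  have "has_moments (\<lambda>d. (\<Sum>j<B. mu b (\<rho> j) (d - digsum_gain b B a j)) / real B)
      ((\<Sum>j<B. 1) / real B) ((\<Sum>j<B. 0 + of_int (digsum_gain b B a j) * 1) / real B)
      ((\<Sum>j<B. S j + 2 * of_int (digsum_gain b B a j) * 0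
        + (of_int (digsum_gain b B a j))^2 * 1) / real B)"
    by (rule has_moments_average) (rule moments)
  moreover have "(\<Sum>j<B. of_int (digsum_gain b B a j) :: real) = 0"
    using sum_digsum_gain[OF B, of b a] by (metis of_int_0 of_int_sum)
  ultimately show "has_moments (mu b r) 1 0
      ((\<Sum>j<B. S j + (of_int (digsum_gain b B a j))^2) / real B)"
    using B by (simp add: mu_average(2)[OF B split densities])
qed

section \<open>The laws of Delta^(0) and Delta^(1)\<close>

lemma tendsto_freq_const: "freq (\<lambda>_. c) \<longlonglongrightarrow> (if c then 1 else 0)"
proof -
  have "\<forall>\<^sub>F N in sequentially. (if c then 1 else 0) = freq (\<lambda>_. c) N"
    by (rule eventually_sequentiallyI[of 1]) (simp add: freq_def)
  then show ?thesis
    by (rule Lim_transform_eventually[OF tendsto_const])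
qed

lemma mu_0: "has_densities b 0" "mu b 0 = (\<lambda>d. if d = 0 then 1 else 0)"
proof -
  have "(\<lambda>n. Delta b 0 n = d) = (\<lambda>_. d = 0)" for d
    by (auto simp: Delta_def)
  then have lim: "freq (\<lambda>n. Delta b 0 n = d) \<longlonglongrightarrow> (if d = 0 then 1 else 0)" for d
    using tendsto_freq_const[of "d = 0"] by simp
  then show "has_densities b 0"
    unfolding has_densities_def convergent_def by blast
  show "mu b 0 = (\<lambda>d. if d = 0 then 1 else 0)"
    by (rule ext) (rule mu_eqI[OF lim])
qed

lemma has_moments_mu_0: "has_moments (mu b 0) 1 0 0"
proof -
  have "((\<lambda>d::int. if d = 0 then 1 else 0 :: real) has_sum 1) UNIV"
    by (subst has_sum_cong_neutral[where T = "{0}"]) (auto intro: has_sum_finiteI)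
  then show ?thesis
    by (simp add: has_moments_def mu_0(2) if_distrib cong: if_cong)
qed

lemma digsum_gain_one:
  assumes b: "b \<ge> 2" and j: "j < b"
  shows "digsum_gain b b 1 j = (if j + 1 < b then 1 else 1 - int b)"
proof (cases "j + 1 < b")
  case False
  then have "j + 1 = b"
    using j by simp
  then show ?thesis
    using b j by (simp add: digsum_gain_def digsum_less)
qed (use b j in \<open>simp add: digsum_gain_def digsum_less\<close>)

lemma Delta_one_mult_add:
  assumes b: "b \<ge> 2" and j: "j < b"
  shows "Delta b 1 (b * q + j) = (if j + 1 < b then 1 else Delta b 1 q + 1 - int b)"
proof -
  have "Delta b (b ^ 1 * 0 + 1) (b ^ 1 * q + j)
      = Delta b (if j + 1 < b ^ 1 then 0 else Suc 0) q + digsum_gain b (b ^ 1) 1 j"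
    by (rule Delta_pow_mult_add[OF b]) (use b j in simp_all)
  then show ?thesis
    using digsum_gain_one[OF b j] by (simp add: Delta_def)
qed

lemma Delta_one_le:
  assumes b: "b \<ge> 2"
  shows "Delta b 1 n \<le> 1"
proof (induction n rule: less_induct)
  case (less n)
  have "n = b * (n div b) + n mod b" and "n mod b < b"
    using b by simp_all
  moreover have "Delta b 1 (n div b) \<le> 1" if "n > 0"
    using that b by (intro less.IH) simp
  ultimately show ?case
    using Delta_one_mult_add[OF b, of "n mod b" "n div b"] b
    by (cases "n = 0") (simp_all add: Delta_def digsum_less)
qed

lemma tendsto_freq_Delta_one_step:
  assumes b: "b \<ge> 2" and lim: "freq (\<lambda>n. Delta b 1 n = d + int b - 1) \<longlonglongrightarrow> L"
  shows "freq (\<lambda>n. Delta b 1 n = d) \<longlonglongrightarrow> ((if d = 1 then real b - 1 else 0) + L) / real b"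
proof -
  define Q where "Q j q = (if j = b - 1 then Delta b 1 q = d + int b - 1 else d = 1)" for j q
  have "freq (\<lambda>n. Delta b 1 n = d) \<longlonglongrightarrow>
      (\<Sum>j<b. if j = b - 1 then L else (if d = 1 then 1 else 0)) / real b"
  proof (rule tendsto_freq_residue_classes[where Q = Q])
    show "Delta b 1 (b * q + j) = d \<longleftrightarrow> Q j q" if "j < b" for q j
      using Delta_one_mult_add[OF b that] that by (auto simp: Q_def)
    show "freq (Q j) \<longlonglongrightarrow> (if j = b - 1 then L else (if d = 1 then 1 else 0))" for j
      using tendsto_freq_const[of "d = 1"] lim by (simp add: Q_def[abs_def])
  qed (use b in simp)
  also have "(\<Sum>j<b. if j = b - 1 then L else (if d = 1 then 1 else 0))
      = (if d = 1 then real b - 1 else 0) + L"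
    by (subst sum_lessThan_if_eq) (use b in \<open>simp_all add: of_nat_diff\<close>)
  finally show ?thesis .
qed

lemma tendsto_freq_Delta_one_big:
  assumes "b \<ge> 2" and "d \<ge> 2"
  shows "freq (\<lambda>n. Delta b 1 n = d) \<longlonglongrightarrow> 0"
proof -
  have "(\<lambda>n. Delta b 1 n = d) = (\<lambda>_. False)"
    using Delta_one_le[OF assms(1)] assms(2) by (metis not_less one_add_one zle_add1_eq_le)
  then show ?thesis
    using tendsto_freq_const[of False] by simp
qed

lemma tendsto_freq_Delta_one_geometric:
  assumes b: "b \<ge> 2"
  shows "freq (\<lambda>n. Delta b 1 n = 1 - (int b - 1) * int k) \<longlonglongrightarrow> (real b - 1) / real b ^ Suc k"
proof (induction k)
  case 0
  have "freq (\<lambda>n. Delta b 1 n = 1 + int b - 1) \<longlonglongrightarrow> 0"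
    using b by (intro tendsto_freq_Delta_one_big) simp_all
  from tendsto_freq_Delta_one_step[OF b this] show ?case
    by simp
next
  case (Suc k)
  have "(int b - 1) * int (Suc k) \<ge> 1"
    using mult_mono[of 1 "int b - 1" 1 "int (Suc k)"] b by simp
  moreover have "1 - (int b - 1) * int (Suc k) + int b - 1 = 1 - (int b - 1) * int k"
    by (simp add: algebra_simps)
  then have "freq (\<lambda>n. Delta b 1 n = 1 - (int b - 1) * int (Suc k)) \<longlonglongrightarrow>
      ((if 1 - (int b - 1) * int (Suc k) = 1 then real b - 1 else 0)
        + (real b - 1) / real b ^ Suc k) / real b"
    using Suc.IH by (intro tendsto_freq_Delta_one_step[OF b]) simp
  ultimately show ?case
    by (simp add: field_simps)
qed

lemma tendsto_freq_Delta_one_other: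
  assumes b: "b \<ge> 2" and d: "\<And>k. d \<noteq> 1 - (int b - 1) * int k"
  shows "freq (\<lambda>n. Delta b 1 n = d) \<longlonglongrightarrow> 0"
  using d
proof (induction "nat (2 - d)" arbitrary: d rule: less_induct)
  case less
  show ?case
  proof (cases "d \<ge> 2")
    case True
    then show ?thesis by (rule tendsto_freq_Delta_one_big[OF b])
  next
    case False
    have "d + int b - 1 \<noteq> 1 - (int b - 1) * int k" for k
      using less.prems[of "Suc k"] by (simp add: algebra_simps)
    moreover have "nat (2 - (d + int b - 1)) < nat (2 - d)"
      using False b by simp
    ultimately have "freq (\<lambda>n. Delta b 1 n = d + int b - 1) \<longlonglongrightarrow> 0"
      using less.hyps by blast
    then show ?thesis
      using tendsto_freq_Delta_one_step[OF b] less.prems[of 0] by fastforce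
  qed
qed

lemma mu_one:
  assumes b: "b \<ge> 2"
  shows "has_densities b 1"
    and "mu b 1 (1 - (int b - 1) * int k) = (real b - 1) / real b ^ Suc k"
    and "(\<And>k. d \<noteq> 1 - (int b - 1) * int k) \<Longrightarrow> mu b 1 d = 0"
proof -
  show "mu b 1 (1 - (int b - 1) * int k) = (real b - 1) / real b ^ Suc k"
    by (rule mu_eqI[OF tendsto_freq_Delta_one_geometric[OF b]])
  show "mu b 1 d = 0" if "\<And>k. d \<noteq> 1 - (int b - 1) * int k"
    by (rule mu_eqI[OF tendsto_freq_Delta_one_other[OF b that]])
  have "convergent (freq (\<lambda>n. Delta b 1 n = d))" for d
    using tendsto_freq_Delta_one_geometric[OF b] tendsto_freq_Delta_one_other[OF b, of d]
    unfolding convergent_def by (cases "\<exists>k. d = 1 - (int b - 1) * int k") auto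
  then show "has_densities b 1"
    by (simp add: has_densities_def)
qed

lemma mu_one_nonneg:
  assumes "b \<ge> 2"
  shows "mu b 1 d \<ge> 0"
  using mu_one[OF assms] assms by (cases "\<exists>k. d = 1 - (int b - 1) * int k") auto

lemma summable_square_half_power: "summable (\<lambda>k::nat. (real k + 1)^2 * (1/2)^k)"
proof (rule summable_ratio_test[where c = "25/32" and N = 3])
  fix n :: nat
  assume "3 \<le> n"
  then have "(4 * (real n + 2))^2 \<le> (5 * (real n + 1))^2"
    by (intro power_mono) simp_all
  then have "(real n + 2)^2 * (1/2) * (1/2)^n \<le> 25/32 * (real n + 1)^2 * (1/2)^n"
    by (intro mult_right_mono) (simp_all add: power2_eq_square algebra_simps)
  then show "norm ((real (Suc n) + 1)^2 * (1/2)^Suc n) \<le> 25/32 * norm ((real n + 1)^2 * (1/2)^n)"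
    by (simp add: algebra_simps)
qed simp

lemma second_moment_term_mu_one_le:
  fixes k :: nat
  assumes b: "b \<ge> 2"
  defines "d \<equiv> 1 - (int b - 1) * int k"
  shows "(of_int d)^2 * mu b 1 d \<le> (real b)^2 * ((real k + 1)^2 * (1/2)^k)"
proof -
  have "real k \<le> real b * real k"
    using b mult_right_mono[of 1 "real b" "real k"] by simp
  then have "\<bar>of_int d :: real\<bar> \<le> real b * (real k + 1)"
    using b by (simp add: d_def abs_le_iff algebra_simps)
  then have "(of_int d)^2 \<le> (real b * (real k + 1))^2"
    by (metis abs_ge_zero power2_abs power_mono)
  moreover have "(real b - 1) / real b ^ Suc k \<le> 1 / real b ^ k"
    using b by (simp add: field_simps)
  moreover have "1 / real b ^ k \<le> (1/2)^k"
    using b by (simp add: power_divide divide_left_mono power_mono)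
  ultimately have "(of_int d)^2 * ((real b - 1) / real b ^ Suc k)
      \<le> (real b * (real k + 1))^2 * (1/2)^k"
    using b by (intro mult_mono) simp_all
  then show ?thesis
    using mu_one(2)[OF b] by (simp add: d_def power_mult_distrib)
qed

lemma summable_second_moment_mu_one:
  assumes b: "b \<ge> 2"
  shows "(\<lambda>d. (of_int d)^2 * mu b 1 d) summable_on UNIV"
proof -
  define h :: "nat \<Rightarrow> int" where "h k = 1 - (int b - 1) * int k" for k
  define g where "g d = (of_int d)^2 * mu b 1 d" for d
  have "inj h"
    using b by (auto simp: inj_on_def h_def)
  have "summable (g \<circ> h)"
    using second_moment_term_mu_one_le[OF b] mu_one_nonneg[OF b]
    by (intro summable_comparison_test'[OF summable_mult[OF summable_square_half_power]])
      (auto simp: g_def h_def)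
  then have "(g \<circ> h) summable_on UNIV"
    using mu_one_nonneg[OF b] by (subst summable_on_UNIV_nonneg_real_iff) (auto simp: g_def)
  then have "g summable_on range h"
    by (simp add: summable_on_reindex[OF \<open>inj h\<close>])
  moreover have "g d = 0" if "d \<notin> range h" for d
    using that mu_one(3)[OF b] by (auto simp: g_def h_def)
  ultimately show ?thesis
    unfolding g_def[abs_def] by (subst summable_on_cong_neutral[where T = "range h"]) auto
qed

lemma mu_one_average:
  assumes b: "b \<ge> 2"
  shows "mu b 1
    = (\<lambda>d. (\<Sum>j<b. mu b (if j = b - 1 then 1 else 0) (d - digsum_gain b b 1 j)) / real b)"
proof (rule mu_average(2))
  show "Delta b 1 (b * q + j) = Delta b (if j = b - 1 then 1 else 0) q + digsum_gain b b 1 j"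
    if "j < b" for q j
    using Delta_pow_mult_add[OF b, of 1 1 j 0 q] b that by auto
  show "has_densities b (if j = b - 1 then 1 else 0)" for j
    using mu_0(1) mu_one(1)[OF b] by simp
qed (use b in simp)

lemma has_moments_mu_one_fixed_point:
  assumes b: "b \<ge> 2" and moments: "has_moments (mu b 1) T M S"
  shows "T = (real b - 1 + T) / real b" and "M = (real b - 1 + (M + (1 - real b) * T)) / real b"
proof -
  define T' M' S' where "T' j = (if j = b - 1 then T else 1)"
    and "M' j = (if j = b - 1 then M else 0)" and "S' j = (if j = b - 1 then S else 0)" for j :: nat
  have "has_moments (mu b (if j = b - 1 then 1 else 0)) (T' j) (M' j) (S' j)" for j
    using moments has_moments_mu_0 by (simp add: T'_def M'_def S'_def)
  then have "has_moments (mu b 1) ((\<Sum>j<b. T' j) / real b)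
      ((\<Sum>j<b. M' j + of_int (digsum_gain b b 1 j) * T' j) / real b)
      ((\<Sum>j<b. S' j + 2 * of_int (digsum_gain b b 1 j) * M' j
        + (of_int (digsum_gain b b 1 j))^2 * T' j) / real b)"
    unfolding mu_one_average[OF b] by (rule has_moments_average)
  moreover have "(\<Sum>j<b. T' j) = real b - 1 + T"
    using sum_lessThan_if_eq[of "b - 1" b T 1] b by (simp add: T'_def of_nat_diff)
  moreover have "(\<Sum>j<b. M' j + of_int (digsum_gain b b 1 j) * T' j)
      = (\<Sum>j<b. if j = b - 1 then M + (1 - real b) * T else 1)"
    using digsum_gain_one[OF b] by (intro sum.cong) (auto simp: M'_def T'_def)
  moreover have "\<dots> = real b - 1 + (M + (1 - real b) * T)"
    using sum_lessThan_if_eq[of "b - 1" b "M + (1 - real b) * T" 1] b by (simp add: of_nat_diff)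
  ultimately show "T = (real b - 1 + T) / real b"
    and "M = (real b - 1 + (M + (1 - real b) * T)) / real b"
    using moments has_sum_unique unfolding has_moments_def by metis+
qed

lemma has_moments_mu_one:
  assumes b: "b \<ge> 2"
  shows "\<exists>S. has_moments (mu b 1) 1 0 S"
proof -
  obtain T M S where moments: "has_moments (mu b 1) T M S"
    using has_moments_of_summable_second[OF mu_one_nonneg[OF b] summable_second_moment_mu_one[OF b]]
    by blast
  note T = has_moments_mu_one_fixed_point(1)[OF b moments]
  note M = has_moments_mu_one_fixed_point(2)[OF b moments]
  from T have "(T - 1) * (real b - 1) = 0"
    using b by (simp add: field_simps)
  then have "T = 1"
    using b by simp
  with M have "M = 0"
    using b by (simp add: field_simps)
  with \<open>T = 1\<close> moments show ?thesis
    by blast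
qed

section \<open>Densities and moments for all r\<close>

lemma Suc_div_less:
  fixes b r :: nat
  assumes "b \<ge> 2" and "r \<ge> 2" and "r mod b > 0"
  shows "Suc (r div b) < r"
proof -
  have "b * (r div b) \<ge> 2 * (r div b)"
    using assms(1) by simp
  moreover have "b * (r div b) + r mod b = r"
    by simp
  ultimately show ?thesis
    using assms(2,3) by linarith
qed

lemma has_densities_and_moments:
  assumes b: "b \<ge> 2"
  shows "has_densities b r \<and> (\<exists>S. has_moments (mu b r) 1 0 S)"
proof (induction r rule: less_induct)
  case (less r)
  consider "r = 0" | "r = 1" | "r \<ge> 2"
    by linarith
  then show ?case
  proof cases
    case 1
    then show ?thesis using mu_0(1) has_moments_mu_0 by blast
  next
    case 2
    then show ?thesis using mu_one(1)[OF b] has_moments_mu_one[OF b] by blast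
  next
    case 3
    define \<rho> :: "nat \<Rightarrow> nat" where "\<rho> j = (if j + r mod b < b then r div b else Suc (r div b))" for j
    have B: "b > 0"
      using b by simp
    have split: "Delta b r (b * q + j) = Delta b (\<rho> j) q + digsum_gain b b (r mod b) j"
      if "j < b" for q j
      using Delta_pow_mult_add[OF b, of "r mod b" 1 j "r div b" q] B that by (simp add: \<rho>_def)
    have "\<rho> j < r" if "j < b" for j
      using 3 b Suc_div_less[OF b 3] that by (auto simp: \<rho>_def)
    then have "\<forall>j\<in>{..<b}. \<exists>S. has_densities b (\<rho> j) \<and> has_moments (mu b (\<rho> j)) 1 0 S"
      using less.IH by blast
    then obtain S where "\<And>j. j < b \<Longrightarrow> has_densities b (\<rho> j) \<and> has_moments (mu b (\<rho> j)) 1 0 (S j)"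
      by (metis bchoice lessThan_iff)
    then show ?thesis
      using has_moments_mu_average[OF B split] by blast
  qed
qed

lemma has_moments_mu_pow_mult_pred:
  assumes b: "b \<ge> 2"
    and S0: "has_moments (mu b r) 1 0 S0" and S1: "has_moments (mu b (Suc r)) 1 0 S1"
  shows "has_moments (mu b (b ^ m * r + b ^ m - 1)) 1 0
    ((S0 + (real b ^ m - 1) * S1 + (real b ^ Suc m - real b)) / real b ^ m)"
proof -
  have B: "b ^ m > 0"
    using b by simp
  define \<rho> :: "nat \<Rightarrow> nat" where "\<rho> j = (if j = 0 then r else Suc r)" for j
  have split: "Delta b (b ^ m * r + (b ^ m - 1)) (b ^ m * q + j)
      = Delta b (\<rho> j) q + digsum_gain b (b ^ m) (b ^ m - 1) j" if "j < b ^ m" for q j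
    using Delta_pow_mult_add[OF b, of "b ^ m - 1" m j r q] B that by (auto simp: \<rho>_def)
  have "has_moments (mu b (b ^ m * r + (b ^ m - 1))) 1 0
      ((\<Sum>j<b ^ m. (if j = 0 then S0 else S1) + (of_int (digsum_gain b (b ^ m) (b ^ m - 1) j))^2)
        / real (b ^ m))"
    using has_densities_and_moments[OF b] S0 S1
    by (intro has_moments_mu_average(2)[OF B split]) (auto simp: \<rho>_def)
  moreover have "b ^ m * r + (b ^ m - 1) = b ^ m * r + b ^ m - 1"
    using B by linarith
  moreover have "(\<Sum>j<b ^ m. (of_int (digsum_gain b (b ^ m) (b ^ m - 1) j) :: real)^2)
      = real b ^ Suc m - real b"
    using arg_cong[OF sum_digsum_gain_pred_squared[OF b, of m], of real_of_int] by simp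
  ultimately show ?thesis
    using sum_lessThan_if_eq[of 0 "b ^ m" S0 S1] B by (simp add: sum.distrib of_nat_diff)
qed

theorem mainTheorem12:
  fixes b r m :: nat
  assumes "b \<ge> 2" and "m \<ge> 1"
  shows "Var_mu b (b^m * r + b^m - 1)
         = 1 / real b ^ m * Var_mu b r + (1 - 1 / real b ^ m) * Var_mu b (r + 1)
           + real b - 1 / real b ^ (m - 1)"
proof -
  obtain S0 S1 where S0: "has_moments (mu b r) 1 0 S0" and S1: "has_moments (mu b (Suc r)) 1 0 S1"
    using has_densities_and_moments[OF assms(1)] by blast
  obtain k where m: "m = Suc k"
    using assms(2) by (cases m) auto
  have "Var_mu b (b ^ m * r + b ^ m - 1)
      = (S0 + (real b ^ m - 1) * S1 + (real b ^ Suc m - real b)) / real b ^ m"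
    using Var_mu_eq_moments[OF has_moments_mu_pow_mult_pred[OF assms(1) S0 S1]] by simp
  also have "\<dots> = 1 / real b ^ m * S0 + (1 - 1 / real b ^ m) * S1 + real b - 1 / real b ^ (m - 1)"
    using assms(1) unfolding m by (simp add: field_simps)
  finally show ?thesis
    using Var_mu_eq_moments[OF S0] Var_mu_eq_moments[OF S1] by simp
qed

end
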